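(* Let $(X,\tau)$ be a $\mathbb{B}$-topological space. (i) If $(X,\tau)$ is $T_1$, then the topological space $(X,\tau[tt]\vee\tau[ff])$ is $T_1$. (ii) If both topological spaces $(X,\tau[tt])$ and $(X,\tau[ff])$ are $T_1$, then $(X,\tau)$ is $T_1$.
   Context: $\mathbb{B}=\{0,1,tt,ff\}$ is the four-element Boolean algebra with bottom $0$, top $1$, and $tt,ff$ incomparable complements; $a\to b=\neg a\vee b$. A $\mathbb{B}$-topology on $X$ is $\tau\subseteq\mathbb{B}^X$ containing all constant maps and closed under arbitrary pointwise joins and finite pointwise meets; $\tau[b]=\{\lambda[b]:\lambda\in\tau\}$ with $\lambda[b]=\{x:\lambda(x)\ge b\}$; $\tau[tt]\vee\tau[ff]$ is the topology generated by $\tau[tt]\cup\tau[ff]$. Specialization $\mathbb{B}$-order: $\Omega(\tau)(x,y)=\bigwedge_{\lambda\in\tau}(\lambda(x)\to\lambda(y))$. $(X,\tau)$ is $R_0$ if $\Omega(\tau)$ is symmetric, $T_0$ if $\Omega(\tau)(x,y)=1=\Omega(\tau)(y,x)$ implies $x=y$, and $T_1$ if it is both $T_0$ and $R_0$. *)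

theory Defs
  imports "HOL-Analysis.Analysis" "HOL-Library.Product_Order"
begin

text \<open>The four-element Boolean algebra B = {0,1,tt,ff}, realised as bool \<times> bool
  with the componentwise order: 0 = bot, 1 = top, tt and ff incomparable complements.\<close>
type_synonym B4 = "bool \<times> bool"

definition tt :: B4 where "tt = (True, False)"
definition ff :: B4 where "ff = (False, True)"

definition bimp :: "B4 \<Rightarrow> B4 \<Rightarrow> B4" where "bimp a b = sup (- a) b"

definition is_Btopology :: "('a \<Rightarrow> B4) set \<Rightarrow> bool" where
  "is_Btopology \<tau> \<longleftrightarrow>
     (\<forall>c. (\<lambda>x. c) \<in> \<tau>) \<and>
     (\<forall>S. S \<subseteq> \<tau> \<longrightarrow> Sup S \<in> \<tau>) \<and>
     (\<forall>l\<in>\<tau>. \<forall>m\<in>\<tau>. inf l m \<in> \<tau>)"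

definition Bcut :: "('a \<Rightarrow> B4) \<Rightarrow> B4 \<Rightarrow> 'a set" where
  "Bcut l b = {x. b \<le> l x}"

definition cut_top :: "('a \<Rightarrow> B4) set \<Rightarrow> B4 \<Rightarrow> 'a topology" where
  "cut_top \<tau> b = topology_generated_by {Bcut l b | l. l \<in> \<tau>}"

definition join_top :: "('a \<Rightarrow> B4) set \<Rightarrow> 'a topology" where
  "join_top \<tau> = topology_generated_by ({Bcut l tt | l. l \<in> \<tau>} \<union> {Bcut l ff | l. l \<in> \<tau>})"

definition spec_order :: "('a \<Rightarrow> B4) set \<Rightarrow> 'a \<Rightarrow> 'a \<Rightarrow> B4" where
  "spec_order \<tau> x y = (INF l\<in>\<tau>. bimp (l x) (l y))"

definition B_R0 :: "('a \<Rightarrow> B4) set \<Rightarrow> bool" where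
  "B_R0 \<tau> \<longleftrightarrow> (\<forall>x y. spec_order \<tau> x y = spec_order \<tau> y x)"

definition B_T0 :: "('a \<Rightarrow> B4) set \<Rightarrow> bool" where
  "B_T0 \<tau> \<longleftrightarrow> (\<forall>x y. spec_order \<tau> x y = top \<and> spec_order \<tau> y x = top \<longrightarrow> x = y)"

definition B_T1 :: "('a \<Rightarrow> B4) set \<Rightarrow> bool" where
  "B_T1 \<tau> \<longleftrightarrow> B_T0 \<tau> \<and> B_R0 \<tau>"

end

theory Submission
  imports Defs
begin

text \<open>Writing elements of B as pairs, the two coordinates of the specialization B-order
  \<open>\<Omega>(\<tau>)(x,y)\<close> are the specialization preorders of the ordinary topologies \<open>\<tau>[tt]\<close> and
  \<open>\<tau>[ff]\<close>. Hence \<open>\<tau>[tt] \<or> \<tau>[ff]\<close> is T1 iff \<open>\<Omega>(\<tau>)(x,y) \<noteq> 1\<close> for all \<open>x \<noteq> y\<close>, which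
  follows from B-T1 by symmetry and T0. Conversely, if \<open>\<tau>[tt]\<close> and \<open>\<tau>[ff]\<close> are both T1,
  then \<open>\<Omega>(\<tau>)(x,y) = 0\<close> whenever \<open>x \<noteq> y\<close>, so \<open>\<Omega>(\<tau>)\<close> is symmetric and T0 holds.\<close>

lemma generate_topology_on_separates:
  assumes "generate_topology_on S U" "x \<in> U" "y \<notin> U"
  shows "\<exists>V\<in>S. x \<in> V \<and> y \<notin> V"
  using assms by (induction rule: generate_topology_on.induct) blast+

lemma t1_space_topology_generated_by_iff:
  "t1_space (topology_generated_by S) \<longleftrightarrow>
   (\<forall>x\<in>\<Union>S. \<forall>y\<in>\<Union>S. x \<noteq> y \<longrightarrow> (\<exists>V\<in>S. x \<in> V \<and> y \<notin> V))"
  unfolding t1_space_def topology_generated_by_topspace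
  by (meson generate_topology_on_separates openin_topology_generated_by_iff
      topology_generated_by_Basis)

lemma Union_Bcut_eq_UNIV:
  assumes "is_Btopology \<tau>"
  shows "\<Union>{Bcut l b | l. l \<in> \<tau>} = UNIV"
proof -
  have "(\<lambda>x. top) \<in> \<tau>" using assms unfolding is_Btopology_def by blast
  moreover have "Bcut (\<lambda>x. top) b = UNIV" by (simp add: Bcut_def)
  ultimately show ?thesis by auto
qed

lemma bex_Bcut_separating_iff:
  "(\<exists>V\<in>{Bcut l b | l. l \<in> \<tau>}. x \<in> V \<and> y \<notin> V) \<longleftrightarrow> (\<exists>l\<in>\<tau>. b \<le> l x \<and> \<not> b \<le> l y)"
  by (auto simp: Bcut_def)

lemma fst_spec_order: "fst (spec_order \<tau> x y) \<longleftrightarrow> (\<forall>l\<in>\<tau>. tt \<le> l x \<longrightarrow> tt \<le> l y)"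
  unfolding spec_order_def bimp_def
  by (auto simp: fst_Inf image_image uminus_prod_def sup_prod_def tt_def less_eq_prod_def)

lemma snd_spec_order: "snd (spec_order \<tau> x y) \<longleftrightarrow> (\<forall>l\<in>\<tau>. ff \<le> l x \<longrightarrow> ff \<le> l y)"
  unfolding spec_order_def bimp_def
  by (auto simp: snd_Inf image_image uminus_prod_def sup_prod_def ff_def less_eq_prod_def)

lemma t1_space_cut_top_tt_iff:
  assumes "is_Btopology \<tau>"
  shows "t1_space (cut_top \<tau> tt) \<longleftrightarrow> (\<forall>x y. x \<noteq> y \<longrightarrow> \<not> fst (spec_order \<tau> x y))"
  unfolding cut_top_def t1_space_topology_generated_by_iff Union_Bcut_eq_UNIV[OF assms]
    bex_Bcut_separating_iff fst_spec_order
  by simp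

lemma t1_space_cut_top_ff_iff:
  assumes "is_Btopology \<tau>"
  shows "t1_space (cut_top \<tau> ff) \<longleftrightarrow> (\<forall>x y. x \<noteq> y \<longrightarrow> \<not> snd (spec_order \<tau> x y))"
  unfolding cut_top_def t1_space_topology_generated_by_iff Union_Bcut_eq_UNIV[OF assms]
    bex_Bcut_separating_iff snd_spec_order
  by simp

lemma t1_space_join_top_iff:
  assumes "is_Btopology \<tau>"
  shows "t1_space (join_top \<tau>) \<longleftrightarrow> (\<forall>x y. x \<noteq> y \<longrightarrow> spec_order \<tau> x y \<noteq> top)"
proof -
  have "\<Union>({Bcut l tt | l. l \<in> \<tau>} \<union> {Bcut l ff | l. l \<in> \<tau>}) = UNIV"
    using Union_Bcut_eq_UNIV[OF assms] by simp
  moreover have "spec_order \<tau> x y \<noteq> top \<longleftrightarrow>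
      \<not> fst (spec_order \<tau> x y) \<or> \<not> snd (spec_order \<tau> x y)" for x y
    by (simp add: prod_eq_iff top_prod_def)
  ultimately show ?thesis
    unfolding join_top_def t1_space_topology_generated_by_iff bex_Un
      bex_Bcut_separating_iff fst_spec_order snd_spec_order
    by simp
qed

lemma B_T1_imp_spec_order_ne_top:
  assumes "B_T1 \<tau>" "x \<noteq> y"
  shows "spec_order \<tau> x y \<noteq> top"
  using assms unfolding B_T1_def B_T0_def B_R0_def by metis

lemma B_T1_if_spec_order_eq_bot:
  assumes "\<And>x y. x \<noteq> y \<Longrightarrow> spec_order \<tau> x y = bot"
  shows "B_T1 \<tau>"
  unfolding B_T1_def B_T0_def B_R0_def
proof (intro conjI allI impI)
  fix x y
  show "spec_order \<tau> x y = spec_order \<tau> y x"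
    by (cases "x = y") (simp_all add: assms)
next
  fix x y
  assume "spec_order \<tau> x y = top \<and> spec_order \<tau> y x = top"
  then show "x = y"
    using assms[of x y] by (auto simp: bot_prod_def top_prod_def)
qed

theorem mainTheorem14:
  fixes \<tau> :: "('a \<Rightarrow> B4) set"
  assumes "is_Btopology \<tau>"
  shows "(B_T1 \<tau> \<longrightarrow> t1_space (join_top \<tau>))
     \<and> (t1_space (cut_top \<tau> tt) \<and> t1_space (cut_top \<tau> ff) \<longrightarrow> B_T1 \<tau>)"
proof (intro conjI impI)
  assume "B_T1 \<tau>"
  then show "t1_space (join_top \<tau>)"
    by (simp add: t1_space_join_top_iff[OF assms] B_T1_imp_spec_order_ne_top)
next
  assume "t1_space (cut_top \<tau> tt) \<and> t1_space (cut_top \<tau> ff)"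
  then have "\<not> fst (spec_order \<tau> x y)" "\<not> snd (spec_order \<tau> x y)" if "x \<noteq> y" for x y
    using that t1_space_cut_top_tt_iff[OF assms] t1_space_cut_top_ff_iff[OF assms] by blast+
  then have "spec_order \<tau> x y = bot" if "x \<noteq> y" for x y
    using that by (simp add: prod_eq_iff bot_prod_def)
  then show "B_T1 \<tau>" by (rule B_T1_if_spec_order_eq_bot)
qed

end
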